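(* Let $(\mathfrak g,N)$ be a finite-dimensional Nijenhuis perm algebra, $(V,\ell,r)$ a finite-dimensional representation of $\mathfrak g$, and $S:\mathfrak g\to\mathfrak g$, $\alpha,\beta:V\to V$ linear maps. The following are equivalent: (1) $(\mathfrak g\ltimes_{\ell,r}V,N+\alpha)$ is a Nijenhuis perm algebra and the linear map $S+\beta$ on $\mathfrak g\oplus V$ is admissible to it; (2) $(\mathfrak g\ltimes_{r^*-\ell^*,r^*}V^*,N+\beta^* )$ is a Nijenhuis perm algebra and the linear map $S+\alpha^*$ on $\mathfrak g\oplus V^*$ is admissible to it; (3) (a) $(V,\ell,r,\alpha)$ is a representation of $(\mathfrak g,N)$; (b) $S$ is admissible to $(\mathfrak g,N)$; (c) $\beta$ is admissible to $(\mathfrak g,N)$ on $(V,\ell,r)$; (d) for all $x\in\mathfrak g$, $u\in V$: $$\beta(\ell(x)\alpha(u))+\ell(S^2(x))u=\ell(S(x))\alpha(u)+\beta(\ell(S(x))u),$$ $$\beta(\alpha(u)r(x))+u\,r(S^2(x))=\alpha(u)r(S(x))+\beta(u\,r(S(x))).$$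
   Context: Over a field $K$. A (right) perm algebra: bilinear product with $(xy)z=x(yz)=x(zy)$. A representation $(V,\ell,r)$: linear $\ell,r:\mathfrak g\to\mathrm{End}(V)$, left action $\ell(x)v$, right action $v\,r(x)$, with $v\,r(xy)=(v\,r(x))r(y)=(v\,r(y))r(x)$ and $\ell(xy)v=\ell(x)(\ell(y)v)=\ell(x)(v\,r(y))=(\ell(x)v)r(y)$. Nijenhuis operator $N$: $N(x)N(y)+N^2(xy)=N(N(x)y)+N(xN(y))$. A representation of $(\mathfrak g,N)$: $(V,\ell,r,\alpha)$ with $\ell(N(x))\alpha(v)+\alpha^2(\ell(x)v)=\alpha(\ell(N(x))v)+\alpha(\ell(x)\alpha(v))$ and $\alpha(v)r(N(x))+\alpha^2(v\,r(x))=\alpha(v\,r(N(x)))+\alpha(\alpha(v)r(x))$. $\mathfrak g\ltimes_{\ell,r}V$ is $\mathfrak g\oplus V$ with product $(x+u)(y+v)=xy+\ell(x)v+u\,r(y)$; $(N+\alpha)(x+u)=N(x)+\alpha(u)$, $(S+\beta)(x+u)=S(x)+\beta(u)$. Dual maps: $\langle\ell^*(x)u^*,v\rangle=\langle u^*,\ell(x)v\rangle$, $\langle u^*r^*(x),v\rangle=\langle u^*,v\,r(x)\rangle$, and $\alpha^*,\beta^*$ are the dual maps of $\alpha,\beta$; $\mathfrak g\ltimes_{r^*-\ell^*,r^*}V^*$ is $\mathfrak g\oplus V^*$ with product $(x+a)(y+b)=xy+(b\,r^*(x)-\ell^*(x)b)+a\,r^*(y)$. A linear map $S$ on a Nijenhuis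 perm algebra $(A,N)$ is admissible to $(A,N)$ if $S(N(x)y)+xS^2(y)-N(x)S(y)-S(xS(y))=0$ and $S(xN(y))+S^2(x)y-S(x)N(y)-S(S(x)y)=0$ for all $x,y\in A$. $\beta$ is admissible to $(\mathfrak g,N)$ on $(V,\ell,r)$ if for all $x\in\mathfrak g,u\in V$: $\beta(\ell(N(x))u)+\ell(x)\beta^2(u)-\ell(N(x))\beta(u)-\beta(\ell(x)\beta(u))=0$ and $\beta(u\,r(N(x)))+\beta^2(u)r(x)-\beta(u)r(N(x))-\beta(\beta(u)r(x))=0$. *)

theory Defs
  imports "HOL-Analysis.Analysis"
begin

(* Finite-dimensional spaces over a field 'k are modelled as coordinate spaces 'k^'n
   with 'n a finite index type; scalar multiplication is ( *s). *)

abbreviation vlin :: "('k::field^'n \<Rightarrow> 'k^'m) \<Rightarrow> bool" where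
  "vlin f \<equiv> Vector_Spaces.linear vector_scalar_mult vector_scalar_mult f"

definition pscale :: "'k::field \<Rightarrow> ('k^'n) \<times> ('k^'m) \<Rightarrow> ('k^'n) \<times> ('k^'m)" where
  "pscale c p = (c *s fst p, c *s snd p)"

definition bilinear_op :: "('k::field \<Rightarrow> 'b \<Rightarrow> 'b) \<Rightarrow> ('b \<Rightarrow> 'b \<Rightarrow> 'b::ab_group_add) \<Rightarrow> bool" where
  "bilinear_op sc m \<longleftrightarrow> (\<forall>x. Vector_Spaces.linear sc sc (m x)) \<and> (\<forall>y. Vector_Spaces.linear sc sc (\<lambda>x. m x y))"

definition perm_algebra :: "('k::field \<Rightarrow> 'b \<Rightarrow> 'b) \<Rightarrow> ('b \<Rightarrow> 'b \<Rightarrow> 'b::ab_group_add) \<Rightarrow> bool" where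
  "perm_algebra sc m \<longleftrightarrow> bilinear_op sc m \<and>
     (\<forall>x y z. m (m x y) z = m x (m y z) \<and> m x (m y z) = m x (m z y))"

definition nijenhuis_op :: "('k::field \<Rightarrow> 'b \<Rightarrow> 'b) \<Rightarrow> ('b \<Rightarrow> 'b \<Rightarrow> 'b::ab_group_add) \<Rightarrow> ('b \<Rightarrow> 'b) \<Rightarrow> bool" where
  "nijenhuis_op sc m N \<longleftrightarrow> Vector_Spaces.linear sc sc N \<and>
     (\<forall>x y. m (N x) (N y) + N (N (m x y)) = N (m (N x) y) + N (m x (N y)))"

definition nijenhuis_perm_algebra :: "('k::field \<Rightarrow> 'b \<Rightarrow> 'b) \<Rightarrow> ('b \<Rightarrow> 'b \<Rightarrow> 'b::ab_group_add) \<Rightarrow> ('b \<Rightarrow> 'b) \<Rightarrow> bool" where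
  "nijenhuis_perm_algebra sc m N \<longleftrightarrow> perm_algebra sc m \<and> nijenhuis_op sc m N"

definition admissible :: "('k::field \<Rightarrow> 'b \<Rightarrow> 'b) \<Rightarrow> ('b \<Rightarrow> 'b \<Rightarrow> 'b::ab_group_add) \<Rightarrow> ('b \<Rightarrow> 'b) \<Rightarrow> ('b \<Rightarrow> 'b) \<Rightarrow> bool" where
  "admissible sc m N S \<longleftrightarrow> Vector_Spaces.linear sc sc S \<and>
     (\<forall>x y. S (m (N x) y) + m x (S (S y)) - m (N x) (S y) - S (m x (S y)) = 0) \<and>
     (\<forall>x y. S (m x (N y)) + m (S (S x)) y - m (S x) (N y) - S (m (S x) y) = 0)"

(* representation (V,l,r) of the perm algebra (g, m); r x v stands for  v r(x) *)
definition perm_rep :: "('k::field^'n \<Rightarrow> 'k^'n \<Rightarrow> 'k^'n) \<Rightarrow> ('k^'n \<Rightarrow> 'k^'m \<Rightarrow> 'k^'m) \<Rightarrow> ('k^'n \<Rightarrow> 'k^'m \<Rightarrow> 'k^'m) \<Rightarrow> bool" where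
  "perm_rep m l r \<longleftrightarrow> (\<forall>v. vlin (\<lambda>x. l x v)) \<and> (\<forall>v. vlin (\<lambda>x. r x v)) \<and> (\<forall>x. vlin (l x)) \<and> (\<forall>x. vlin (r x)) \<and>
     (\<forall>x y v. r (m x y) v = r y (r x v) \<and> r y (r x v) = r x (r y v)) \<and>
     (\<forall>x y v. l (m x y) v = l x (l y v) \<and> l x (l y v) = l x (r y v) \<and> l x (r y v) = r y (l x v))"

definition nijenhuis_rep :: "('k::field^'n \<Rightarrow> 'k^'n \<Rightarrow> 'k^'n) \<Rightarrow> ('k^'n \<Rightarrow> 'k^'n) \<Rightarrow> ('k^'n \<Rightarrow> 'k^'m \<Rightarrow> 'k^'m) \<Rightarrow> ('k^'n \<Rightarrow> 'k^'m \<Rightarrow> 'k^'m) \<Rightarrow> ('k^'m \<Rightarrow> 'k^'m) \<Rightarrow> bool" where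
  "nijenhuis_rep m N l r \<alpha> \<longleftrightarrow> perm_rep m l r \<and> vlin \<alpha> \<and>
     (\<forall>x v. l (N x) (\<alpha> v) + \<alpha> (\<alpha> (l x v)) = \<alpha> (l (N x) v) + \<alpha> (l x (\<alpha> v))) \<and>
     (\<forall>x v. r (N x) (\<alpha> v) + \<alpha> (\<alpha> (r x v)) = \<alpha> (r (N x) v) + \<alpha> (r x (\<alpha> v)))"

definition admissible_rep :: "('k::field^'n \<Rightarrow> 'k^'n) \<Rightarrow> ('k^'n \<Rightarrow> 'k^'m \<Rightarrow> 'k^'m) \<Rightarrow> ('k^'n \<Rightarrow> 'k^'m \<Rightarrow> 'k^'m) \<Rightarrow> ('k^'m \<Rightarrow> 'k^'m) \<Rightarrow> bool" where
  "admissible_rep N l r \<beta> \<longleftrightarrow> vlin \<beta> \<and>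
     (\<forall>x u. \<beta> (l (N x) u) + l x (\<beta> (\<beta> u)) - l (N x) (\<beta> u) - \<beta> (l x (\<beta> u)) = 0) \<and>
     (\<forall>x u. \<beta> (r (N x) u) + r x (\<beta> (\<beta> u)) - r (N x) (\<beta> u) - \<beta> (r x (\<beta> u)) = 0)"

definition semidirect :: "('a \<Rightarrow> 'a \<Rightarrow> 'a) \<Rightarrow> ('a \<Rightarrow> 'v \<Rightarrow> 'v::plus) \<Rightarrow> ('a \<Rightarrow> 'v \<Rightarrow> 'v) \<Rightarrow> 'a \<times> 'v \<Rightarrow> 'a \<times> 'v \<Rightarrow> 'a \<times> 'v" where
  "semidirect m l r p q = (m (fst p) (fst q), l (fst p) (snd q) + r (fst q) (snd p))"

(* canonical pairing between V^* and V; V^* = 'k^'m via the standard (nondegenerate) pairing *)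
definition pairing :: "'k::field^'m \<Rightarrow> 'k^'m \<Rightarrow> 'k" where
  "pairing a v = (\<Sum>i\<in>UNIV. a $ i * v $ i)"

definition dual_map :: "('k::field^'m \<Rightarrow> 'k^'m) \<Rightarrow> 'k^'m \<Rightarrow> 'k^'m" where
  "dual_map f = (THE g. \<forall>a v. pairing (g a) v = pairing a (f v))"

definition dual_semidirect :: "('k::field^'n \<Rightarrow> 'k^'n \<Rightarrow> 'k^'n) \<Rightarrow> ('k^'n \<Rightarrow> 'k^'m \<Rightarrow> 'k^'m) \<Rightarrow> ('k^'n \<Rightarrow> 'k^'m \<Rightarrow> 'k^'m) \<Rightarrow> ('k^'n) \<times> ('k^'m) \<Rightarrow> ('k^'n) \<times> ('k^'m) \<Rightarrow> ('k^'n) \<times> ('k^'m)" where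
  "dual_semidirect m l r p q = (m (fst p) (fst q),
      (dual_map (r (fst p)) (snd q) - dual_map (l (fst p)) (snd q)) + dual_map (r (fst q)) (snd p))"

end

theory Submission
  imports Defs
begin

text \<open>
  Each identity defining a Nijenhuis perm algebra with an admissible map is bilinear, so on
  g \<oplus> V it holds iff it holds for pure pairs: the g-component is the identity for (g, N, S),
  and the V-component is a sum of the defects of the representation, admissibility and
  compatibility conditions for l and r, one in each variable. On g \<oplus> V*, pairing the
  V*-component with v \<in> V transposes it into the same defects with the roles of \<alpha> and \<beta>
  exchanged, and nondegeneracy of the pairing separates them again.
\<close>

lemma pairing_add_left [simp]: "pairing (a + b) v = pairing a v + pairing b v"
  by (simp add: pairing_def distrib_right sum.distrib)

lemma pairing_diff_left [simp]: "pairing (a - b) v = pairing a v - pairing b v"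
  by (simp add: pairing_def left_diff_distrib sum_subtractf)

lemma pairing_zero_left [simp]: "pairing 0 v = 0"
  by (simp add: pairing_def)

lemma pairing_scale_left [simp]: "pairing (c *s a) v = c * pairing a v"
  by (simp add: pairing_def sum_distrib_left mult.assoc)

lemma pairing_zero_right [simp]: "pairing a 0 = 0"
  by (simp add: pairing_def)

lemma pairing_add_right: "pairing a (u + v) = pairing a u + pairing a v"
  by (simp add: pairing_def distrib_left sum.distrib)

lemma pairing_diff_right: "pairing a (u - v) = pairing a u - pairing a v"
  by (simp add: pairing_def right_diff_distrib sum_subtractf)

lemma pairing_scale_right: "pairing a (c *s v) = c * pairing a v"
  by (simp add: pairing_def sum_distrib_left mult_ac)

lemma pairing_commute: "pairing a v = pairing v a"
  by (simp add: pairing_def mult.commute)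

lemma pairing_axis: "pairing a (axis i 1) = a $ i"
proof -
  have "pairing a (axis i 1) = (\<Sum>j\<in>UNIV. if j = i then a $ i else 0)"
    unfolding pairing_def by (rule sum.cong) (auto simp: axis_def)
  then show ?thesis by simp
qed

lemma pairing_eqI_left: "(\<And>v. pairing a v = pairing b v) \<Longrightarrow> a = b"
  by (metis pairing_axis vec_eq_iff)

lemma pairing_eqI_right: "(\<And>a. pairing a u = pairing a w) \<Longrightarrow> u = w"
  by (metis pairing_commute pairing_eqI_left)

lemma pairing_linear_right:
  assumes "vlin f"
  shows "pairing a (f v) = pairing (\<chi> i. pairing a (f (axis i 1))) v"
proof -
  have "pairing a (f v) = (\<Sum>j\<in>UNIV. a $ j * (\<Sum>i\<in>UNIV. v $ i * f (axis i 1) $ j))"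
    unfolding pairing_def
    by (intro sum.cong refl arg_cong2[where f="(*)"] Cartesian_Space.linear_componentwise[OF assms])
  also have "\<dots> = (\<Sum>i\<in>UNIV. \<Sum>j\<in>UNIV. a $ j * (v $ i * f (axis i 1) $ j))"
    by (simp only: sum_distrib_left) (rule sum.swap)
  also have "\<dots> = (\<Sum>i\<in>UNIV. (\<Sum>j\<in>UNIV. a $ j * f (axis i 1) $ j) * v $ i)"
    unfolding sum_distrib_right by (intro sum.cong refl) (simp only: mult_ac)
  finally show ?thesis
    by (simp add: pairing_def)
qed

lemma pairing_dual_map [simp]:
  assumes "vlin f"
  shows "pairing (dual_map f a) v = pairing a (f v)"
proof -
  let ?g = "\<lambda>a. \<chi> i. pairing a (f (axis i 1))"
  have transpose: "\<forall>a v. pairing (?g a) v = pairing a (f v)"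
    using pairing_linear_right[OF assms] by (intro allI) (rule sym)
  have "dual_map f = ?g"
    unfolding dual_map_def
  proof (rule the_equality)
    fix g assume "\<forall>a v. pairing (g a) v = pairing a (f v)"
    with transpose show "g = ?g"
      by (intro ext pairing_eqI_left) simp
  qed (fact transpose)
  with transpose show ?thesis
    by simp
qed

lemma linear_dual_map:
  assumes "vlin f"
  shows "vlin (dual_map f)"
  unfolding Vector_Spaces.linear_iff
  by (auto intro!: pairing_eqI_left vec.vector_space_axioms simp: assms)

lemma linear_map_simps:
  assumes "Vector_Spaces.linear s1 s2 f"
  shows "f (x + y) = f x + f y" "f (x - y) = f x - f y" "f 0 = 0"
    "f (s1 c x) = s2 c (f x)" "f (- x) = - f x"
  using assms unfolding linear_iff_module_hom
  by (auto simp: module_hom.add module_hom.diff module_hom.zero module_hom.scale module_hom.neg)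

lemma linear_map_simps_left:
  assumes "\<forall>v. Vector_Spaces.linear s1 s2 (\<lambda>x. g x v)"
  shows "g (x + y) v = g x v + g y v" "g (x - y) v = g x v - g y v" "g 0 v = 0"
    "g (s1 c x) v = s2 c (g x v)" "g (- x) v = - g x v"
  using linear_map_simps[OF assms[rule_format, of v]] by auto

lemma vector_space_pscale: "vector_space (pscale :: 'k::field \<Rightarrow> ('k^'n) \<times> ('k^'m) \<Rightarrow> _)"
  by unfold_locales
    (auto simp: pscale_def algebra_simps vec.scale_right_distrib vec.scale_left_distrib)

lemma linear_pscaleI:
  fixes f :: "('k::field^'n) \<times> ('k^'m) \<Rightarrow> ('k^'n) \<times> ('k^'m)"
  assumes "\<And>p q. f (p + q) = f p + f q" and "\<And>c p. f (pscale c p) = pscale c (f p)"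
  shows "Vector_Spaces.linear pscale pscale f"
  unfolding Vector_Spaces.linear_iff by (auto simp: assms vector_space_pscale)

lemma linear_map_prod_pscale:
  fixes f :: "'k::field^'n \<Rightarrow> 'k^'n" and g :: "'k^'m \<Rightarrow> 'k^'m"
  assumes "vlin f" and "vlin g"
  shows "Vector_Spaces.linear pscale pscale (map_prod f g)"
  by (rule linear_pscaleI) (auto simp: pscale_def linear_map_simps[OF assms(1)] linear_map_simps[OF assms(2)])

definition nijenhuis_defect :: "('b \<Rightarrow> 'b \<Rightarrow> 'b::ab_group_add) \<Rightarrow> ('b \<Rightarrow> 'b) \<Rightarrow> 'b \<Rightarrow> 'b \<Rightarrow> 'b" where
  "nijenhuis_defect m N x y = m (N x) (N y) + N (N (m x y)) - N (m (N x) y) - N (m x (N y))"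

definition admissible_left_defect ::
    "('b \<Rightarrow> 'b \<Rightarrow> 'b::ab_group_add) \<Rightarrow> ('b \<Rightarrow> 'b) \<Rightarrow> ('b \<Rightarrow> 'b) \<Rightarrow> 'b \<Rightarrow> 'b \<Rightarrow> 'b" where
  "admissible_left_defect m N S x y = S (m (N x) y) + m x (S (S y)) - m (N x) (S y) - S (m x (S y))"

definition admissible_right_defect ::
    "('b \<Rightarrow> 'b \<Rightarrow> 'b::ab_group_add) \<Rightarrow> ('b \<Rightarrow> 'b) \<Rightarrow> ('b \<Rightarrow> 'b) \<Rightarrow> 'b \<Rightarrow> 'b \<Rightarrow> 'b" where
  "admissible_right_defect m N S x y = S (m x (N y)) + m (S (S x)) y - m (S x) (N y) - S (m (S x) y)"

lemma nijenhuis_op_iff_defect: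
  "nijenhuis_op sc m N \<longleftrightarrow> Vector_Spaces.linear sc sc N \<and> (\<forall>x y. nijenhuis_defect m N x y = 0)"
  by (simp only: nijenhuis_op_def nijenhuis_defect_def diff_diff_eq right_minus_eq)

lemma admissible_iff_defects:
  "admissible sc m N S \<longleftrightarrow> Vector_Spaces.linear sc sc S \<and>
     (\<forall>x y. admissible_left_defect m N S x y = 0) \<and> (\<forall>x y. admissible_right_defect m N S x y = 0)"
  by (simp add: admissible_def admissible_left_defect_def admissible_right_defect_def)

text \<open>Conditions (3)(a), (c), (d) as defects of a single action \<open>act\<close>, instantiated with both l and r.\<close>

definition action_nijenhuis_defect ::
    "('a \<Rightarrow> 'v \<Rightarrow> 'v::ab_group_add) \<Rightarrow> ('a \<Rightarrow> 'a) \<Rightarrow> ('v \<Rightarrow> 'v) \<Rightarrow> 'a \<Rightarrow> 'v \<Rightarrow> 'v" where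
  "action_nijenhuis_defect act N \<alpha> x v =
     act (N x) (\<alpha> v) + \<alpha> (\<alpha> (act x v)) - \<alpha> (act (N x) v) - \<alpha> (act x (\<alpha> v))"

definition action_admissible_defect ::
    "('a \<Rightarrow> 'v \<Rightarrow> 'v::ab_group_add) \<Rightarrow> ('a \<Rightarrow> 'a) \<Rightarrow> ('v \<Rightarrow> 'v) \<Rightarrow> 'a \<Rightarrow> 'v \<Rightarrow> 'v" where
  "action_admissible_defect act N \<beta> x v =
     \<beta> (act (N x) v) + act x (\<beta> (\<beta> v)) - act (N x) (\<beta> v) - \<beta> (act x (\<beta> v))"

definition action_compatibility_defect ::
    "('a \<Rightarrow> 'v \<Rightarrow> 'v::ab_group_add) \<Rightarrow> ('a \<Rightarrow> 'a) \<Rightarrow> ('v \<Rightarrow> 'v) \<Rightarrow> ('v \<Rightarrow> 'v) \<Rightarrow> 'a \<Rightarrow> 'v \<Rightarrow> 'v" where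
  "action_compatibility_defect act S \<alpha> \<beta> x v =
     \<beta> (act x (\<alpha> v)) + act (S (S x)) v - act (S x) (\<alpha> v) - \<beta> (act (S x) v)"

lemma nijenhuis_rep_iff_defects:
  "nijenhuis_rep m N l r \<alpha> \<longleftrightarrow> perm_rep m l r \<and> vlin \<alpha> \<and>
     (\<forall>x v. action_nijenhuis_defect l N \<alpha> x v = 0) \<and> (\<forall>x v. action_nijenhuis_defect r N \<alpha> x v = 0)"
  by (simp only: nijenhuis_rep_def action_nijenhuis_defect_def diff_diff_eq right_minus_eq)

lemma admissible_rep_iff_defects:
  "admissible_rep N l r \<beta> \<longleftrightarrow> vlin \<beta> \<and>
     (\<forall>x v. action_admissible_defect l N \<beta> x v = 0) \<and> (\<forall>x v. action_admissible_defect r N \<beta> x v = 0)"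
  by (simp add: admissible_rep_def action_admissible_defect_def)

lemma action_compatibility_defect_eq_0_iff:
  "action_compatibility_defect act S \<alpha> \<beta> x v = 0 \<longleftrightarrow>
     \<beta> (act x (\<alpha> v)) + act (S (S x)) v = act (S x) (\<alpha> v) + \<beta> (act (S x) v)"
  by (simp add: action_compatibility_defect_def algebra_simps)

lemma pair_defect_vanishes_iff:
  fixes D :: "'a \<times> 'v \<Rightarrow> 'a \<times> 'v \<Rightarrow> 'a::zero \<times> 'v::monoid_add"
  assumes "\<And>x u y v. D (x, u) (y, v) = (A x y, B x v + C y u)"
    and "\<And>x. B x 0 = 0" and "\<And>y. C y 0 = 0"
  shows "(\<forall>p q. D p q = 0) \<longleftrightarrow> (\<forall>x y. A x y = 0) \<and> (\<forall>x v. B x v = 0) \<and> (\<forall>y u. C y u = 0)"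
proof (intro iffI conjI allI)
  assume D: "\<forall>p q. D p q = 0"
  fix x y u v
  show "A x y = 0" using D[rule_format, of "(x, 0)" "(y, 0)"] by (simp add: assms zero_prod_def)
  show "B x v = 0" using D[rule_format, of "(x, 0)" "(y, v)"] by (simp add: assms zero_prod_def)
  show "C y u = 0" using D[rule_format, of "(x, u)" "(y, 0)"] by (simp add: assms zero_prod_def)
next
  fix p q :: "'a \<times> 'v"
  assume "(\<forall>x y. A x y = 0) \<and> (\<forall>x v. B x v = 0) \<and> (\<forall>y u. C y u = 0)"
  then show "D p q = 0"
    by (cases p, cases q) (simp add: assms zero_prod_def)
qed

lemma dual_pair_defect_vanishes_iff:
  fixes D :: "'a \<times> ('k::field^'m) \<Rightarrow> 'a \<times> ('k^'m) \<Rightarrow> 'a::zero \<times> ('k^'m)"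
  assumes "\<And>x a y b. fst (D (x, a) (y, b)) = A x y"
    and "\<And>x a y b v. pairing (snd (D (x, a) (y, b))) v = pairing a (C y v) + pairing b (B x v)"
  shows "(\<forall>p q. D p q = 0) \<longleftrightarrow> (\<forall>x y. A x y = 0) \<and> (\<forall>y v. C y v = 0) \<and> (\<forall>x v. B x v = 0)"
proof (intro iffI conjI allI)
  assume D: "\<forall>p q. D p q = 0"
  fix x y v
  show "A x y = 0" using D assms(1)[of x 0 y 0] by simp
  show "C y v = 0"
    by (rule pairing_eqI_right) (use D assms(2)[of x _ y 0 v] in simp)
  show "B x v = 0"
    by (rule pairing_eqI_right) (use D assms(2)[of x 0 y _ v] in simp)
next
  fix p q :: "'a \<times> ('k^'m)"
  assume vanish: "(\<forall>x y. A x y = 0) \<and> (\<forall>y v. C y v = 0) \<and> (\<forall>x v. B x v = 0)"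
  obtain x a y b where pq: "p = (x, a)" "q = (y, b)" by (cases p, cases q)
  have "snd (D p q) = 0"
    by (rule pairing_eqI_left) (simp add: pq assms(2) vanish)
  moreover have "fst (D p q) = 0"
    by (simp add: pq assms(1) vanish)
  ultimately show "D p q = 0"
    by (simp add: prod_eq_iff)
qed

locale nijenhuis_semidirect =
  fixes m :: "'k::field^'n::finite \<Rightarrow> 'k^'n \<Rightarrow> 'k^'n"
    and N S :: "'k^'n \<Rightarrow> 'k^'n"
    and l r :: "'k^'n \<Rightarrow> 'k^'m::finite \<Rightarrow> 'k^'m"
    and \<alpha> \<beta> :: "'k^'m \<Rightarrow> 'k^'m"
  assumes nijenhuis_perm: "nijenhuis_perm_algebra vector_scalar_mult m N"
    and rep: "perm_rep m l r"
    and linear_S: "vlin S" and linear_\<alpha>: "vlin \<alpha>" and linear_\<beta>: "vlin \<beta>"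
begin

lemma linear_N: "vlin N"
  and linear_m_right: "\<forall>x. vlin (m x)"
  and linear_m_left: "\<forall>y. vlin (\<lambda>x. m x y)"
  and m_assoc: "m (m x y) z = m x (m y z)"
  and m_perm: "m x (m y z) = m x (m z y)"
  and nijenhuis_defect_m: "nijenhuis_defect m N x y = 0"
  using nijenhuis_perm
  unfolding nijenhuis_perm_algebra_def perm_algebra_def bilinear_op_def nijenhuis_op_iff_defect
  by blast+

lemma linear_l [simp]: "vlin (l x)"
  and linear_r [simp]: "vlin (r x)"
  and linear_l_left: "\<forall>v. vlin (\<lambda>x. l x v)"
  and linear_r_left: "\<forall>v. vlin (\<lambda>x. r x v)"
  and l_m: "l (m x y) v = l x (l y v)"
  and l_r: "l x (r y v) = l x (l y v)"
  and r_l: "r y (l x v) = l x (l y v)"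
  and r_m: "r (m x y) v = r y (r x v)"
  and r_r: "r y (r x v) = r x (r y v)"
  using rep unfolding perm_rep_def by simp_all

lemmas linearity =
  linear_map_simps[OF linear_N] linear_map_simps[OF linear_S]
  linear_map_simps[OF linear_\<alpha>] linear_map_simps[OF linear_\<beta>]
  linear_map_simps[OF linear_m_right[rule_format]] linear_map_simps_left[OF linear_m_left]
  linear_map_simps[OF linear_l] linear_map_simps_left[OF linear_l_left]
  linear_map_simps[OF linear_r] linear_map_simps_left[OF linear_r_left]

lemmas representation_laws = l_m l_r r_l r_m r_r m_assoc m_perm

lemma semidirect_perm_algebra: "perm_algebra pscale (semidirect m l r)"
  unfolding perm_algebra_def bilinear_op_def
proof (intro conjI allI)
  fix p q :: "('k^'n) \<times> ('k^'m)"
  show "Vector_Spaces.linear pscale pscale (semidirect m l r p)"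
    and "Vector_Spaces.linear pscale pscale (\<lambda>p. semidirect m l r p q)"
    by (rule linear_pscaleI; simp add: semidirect_def pscale_def linearity algebra_simps)+
next
  fix p q s :: "('k^'n) \<times> ('k^'m)"
  show "semidirect m l r (semidirect m l r p q) s = semidirect m l r p (semidirect m l r q s)"
    and "semidirect m l r p (semidirect m l r q s) = semidirect m l r p (semidirect m l r s q)"
    by (simp_all add: semidirect_def linearity representation_laws algebra_simps)
qed

lemma semidirect_nijenhuis_defect:
  "nijenhuis_defect (semidirect m l r) (map_prod N \<alpha>) (x, u) (y, v) =
     (nijenhuis_defect m N x y, action_nijenhuis_defect l N \<alpha> x v + action_nijenhuis_defect r N \<alpha> y u)"
  by (simp add: semidirect_def nijenhuis_defect_def action_nijenhuis_defect_def linearity algebra_simps)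

lemma semidirect_admissible_left_defect:
  "admissible_left_defect (semidirect m l r) (map_prod N \<alpha>) (map_prod S \<beta>) (x, u) (y, v) =
     (admissible_left_defect m N S x y,
      action_admissible_defect l N \<beta> x v + action_compatibility_defect r S \<alpha> \<beta> y u)"
  by (simp add: semidirect_def admissible_left_defect_def action_admissible_defect_def
      action_compatibility_defect_def linearity algebra_simps)

lemma semidirect_admissible_right_defect:
  "admissible_right_defect (semidirect m l r) (map_prod N \<alpha>) (map_prod S \<beta>) (x, u) (y, v) =
     (admissible_right_defect m N S x y,
      action_compatibility_defect l S \<alpha> \<beta> x v + action_admissible_defect r N \<beta> y u)"
  by (simp add: semidirect_def admissible_right_defect_def action_admissible_defect_def
      action_compatibility_defect_def linearity algebra_simps)

lemmas pairing_linearity = pairing_add_right pairing_diff_right pairing_scale_right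

lemma dual_semidirect_perm_algebra: "perm_algebra pscale (dual_semidirect m l r)"
  unfolding perm_algebra_def bilinear_op_def
proof (intro conjI allI)
  fix p q :: "('k^'n) \<times> ('k^'m)"
  show "Vector_Spaces.linear pscale pscale (dual_semidirect m l r p)"
    and "Vector_Spaces.linear pscale pscale (\<lambda>p. dual_semidirect m l r p q)"
    by (rule linear_pscaleI;
        auto simp: prod_eq_iff dual_semidirect_def pscale_def linearity intro!: pairing_eqI_left,
        simp_all add: pairing_linearity linearity algebra_simps)+
next
  fix p q s :: "('k^'n) \<times> ('k^'m)"
  show "dual_semidirect m l r (dual_semidirect m l r p q) s = dual_semidirect m l r p (dual_semidirect m l r q s)"
    and "dual_semidirect m l r p (dual_semidirect m l r q s) = dual_semidirect m l r p (dual_semidirect m l r s q)"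
    by (auto simp: prod_eq_iff dual_semidirect_def m_assoc m_perm intro!: pairing_eqI_left,
        simp_all add: pairing_linearity linearity representation_laws algebra_simps)
qed

lemma dual_semidirect_nijenhuis_defect:
  "fst (nijenhuis_defect (dual_semidirect m l r) (map_prod N (dual_map \<beta>)) (x, a) (y, b)) =
     nijenhuis_defect m N x y"
  "pairing (snd (nijenhuis_defect (dual_semidirect m l r) (map_prod N (dual_map \<beta>)) (x, a) (y, b))) v =
     pairing a (action_admissible_defect r N \<beta> y v) +
     pairing b (action_admissible_defect r N \<beta> x v - action_admissible_defect l N \<beta> x v)"
  by (simp_all add: dual_semidirect_def nijenhuis_defect_def action_admissible_defect_def
      linear_\<beta> pairing_linearity linearity representation_laws algebra_simps)

lemma dual_semidirect_admissible_left_defect: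
  "fst (admissible_left_defect (dual_semidirect m l r) (map_prod N (dual_map \<beta>)) (map_prod S (dual_map \<alpha>))
      (x, a) (y, b)) = admissible_left_defect m N S x y"
  "pairing (snd (admissible_left_defect (dual_semidirect m l r) (map_prod N (dual_map \<beta>))
      (map_prod S (dual_map \<alpha>)) (x, a) (y, b))) v =
     pairing a (action_compatibility_defect r S \<alpha> \<beta> y v) +
     pairing b (action_nijenhuis_defect r N \<alpha> x v - action_nijenhuis_defect l N \<alpha> x v)"
  by (simp_all add: dual_semidirect_def admissible_left_defect_def action_compatibility_defect_def
      action_nijenhuis_defect_def linear_\<alpha> linear_\<beta> pairing_linearity linearity representation_laws
      algebra_simps)

lemma dual_semidirect_admissible_right_defect:
  "fst (admissible_right_defect (dual_semidirect m l r) (map_prod N (dual_map \<beta>)) (map_prod S (dual_map \<alpha>))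
      (x, a) (y, b)) = admissible_right_defect m N S x y"
  "pairing (snd (admissible_right_defect (dual_semidirect m l r) (map_prod N (dual_map \<beta>))
      (map_prod S (dual_map \<alpha>)) (x, a) (y, b))) v =
     pairing a (action_nijenhuis_defect r N \<alpha> y v) +
     pairing b (action_compatibility_defect r S \<alpha> \<beta> x v - action_compatibility_defect l S \<alpha> \<beta> x v)"
  by (simp_all add: dual_semidirect_def admissible_right_defect_def action_compatibility_defect_def
      action_nijenhuis_defect_def linear_\<alpha> linear_\<beta> pairing_linearity linearity representation_laws
      algebra_simps)

definition defects_vanish :: bool where
  "defects_vanish \<longleftrightarrow>
     (\<forall>x y. admissible_left_defect m N S x y = 0) \<and> (\<forall>x y. admissible_right_defect m N S x y = 0) \<and>
     (\<forall>x v. action_nijenhuis_defect l N \<alpha> x v = 0) \<and> (\<forall>x v. action_nijenhuis_defect r N \<alpha> x v = 0) \<and>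
     (\<forall>x v. action_admissible_defect l N \<beta> x v = 0) \<and> (\<forall>x v. action_admissible_defect r N \<beta> x v = 0) \<and>
     (\<forall>x v. action_compatibility_defect l S \<alpha> \<beta> x v = 0) \<and>
     (\<forall>x v. action_compatibility_defect r S \<alpha> \<beta> x v = 0)"

lemma compatible_representation_iff_defects_vanish:
  "nijenhuis_rep m N l r \<alpha> \<and> admissible vector_scalar_mult m N S \<and> admissible_rep N l r \<beta> \<and>
     (\<forall>x u. \<beta> (l x (\<alpha> u)) + l (S (S x)) u = l (S x) (\<alpha> u) + \<beta> (l (S x) u)) \<and>
     (\<forall>x u. \<beta> (r x (\<alpha> u)) + r (S (S x)) u = r (S x) (\<alpha> u) + \<beta> (r (S x) u))
   \<longleftrightarrow> defects_vanish"
  unfolding defects_vanish_def nijenhuis_rep_iff_defects admissible_iff_defects admissible_rep_iff_defects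
    action_compatibility_defect_eq_0_iff[symmetric]
  using rep linear_S linear_\<alpha> linear_\<beta> by blast

lemma semidirect_iff_defects_vanish:
  "nijenhuis_perm_algebra pscale (semidirect m l r) (map_prod N \<alpha>) \<and>
     admissible pscale (semidirect m l r) (map_prod N \<alpha>) (map_prod S \<beta>)
   \<longleftrightarrow> defects_vanish"
proof -
  have vanish_at_0:
    "action_nijenhuis_defect act N \<alpha> x 0 = 0" "action_admissible_defect act N \<beta> x 0 = 0"
    "action_compatibility_defect act S \<alpha> \<beta> x 0 = 0"
    if "\<And>x. vlin (act x)" for act :: "'k^'n \<Rightarrow> 'k^'m \<Rightarrow> 'k^'m" and x
    by (simp_all add: action_nijenhuis_defect_def action_admissible_defect_def
        action_compatibility_defect_def linearity linear_map_simps[OF that])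
  have "(\<forall>p q. nijenhuis_defect (semidirect m l r) (map_prod N \<alpha>) p q = 0) \<longleftrightarrow>
      (\<forall>x y. nijenhuis_defect m N x y = 0) \<and> (\<forall>x v. action_nijenhuis_defect l N \<alpha> x v = 0) \<and>
      (\<forall>y u. action_nijenhuis_defect r N \<alpha> y u = 0)"
    by (rule pair_defect_vanishes_iff) (simp_all add: semidirect_nijenhuis_defect vanish_at_0)
  moreover have "(\<forall>p q. admissible_left_defect (semidirect m l r) (map_prod N \<alpha>) (map_prod S \<beta>) p q = 0) \<longleftrightarrow>
      (\<forall>x y. admissible_left_defect m N S x y = 0) \<and> (\<forall>x v. action_admissible_defect l N \<beta> x v = 0) \<and>
      (\<forall>y u. action_compatibility_defect r S \<alpha> \<beta> y u = 0)"
    by (rule pair_defect_vanishes_iff) (simp_all add: semidirect_admissible_left_defect vanish_at_0)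
  moreover have "(\<forall>p q. admissible_right_defect (semidirect m l r) (map_prod N \<alpha>) (map_prod S \<beta>) p q = 0) \<longleftrightarrow>
      (\<forall>x y. admissible_right_defect m N S x y = 0) \<and> (\<forall>x v. action_compatibility_defect l S \<alpha> \<beta> x v = 0) \<and>
      (\<forall>y u. action_admissible_defect r N \<beta> y u = 0)"
    by (rule pair_defect_vanishes_iff) (simp_all add: semidirect_admissible_right_defect vanish_at_0)
  ultimately show ?thesis
    using semidirect_perm_algebra linear_map_prod_pscale[OF linear_N linear_\<alpha>]
      linear_map_prod_pscale[OF linear_S linear_\<beta>]
      nijenhuis_defect_m
    unfolding nijenhuis_perm_algebra_def nijenhuis_op_iff_defect admissible_iff_defects defects_vanish_def
    by (smt (verit))
qed

lemma dual_semidirect_iff_defects_vanish: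
  "nijenhuis_perm_algebra pscale (dual_semidirect m l r) (map_prod N (dual_map \<beta>)) \<and>
     admissible pscale (dual_semidirect m l r) (map_prod N (dual_map \<beta>)) (map_prod S (dual_map \<alpha>))
   \<longleftrightarrow> defects_vanish"
proof -
  have "(\<forall>p q. nijenhuis_defect (dual_semidirect m l r) (map_prod N (dual_map \<beta>)) p q = 0) \<longleftrightarrow>
      (\<forall>x y. nijenhuis_defect m N x y = 0) \<and> (\<forall>y v. action_admissible_defect r N \<beta> y v = 0) \<and>
      (\<forall>x v. action_admissible_defect r N \<beta> x v - action_admissible_defect l N \<beta> x v = 0)"
    by (rule dual_pair_defect_vanishes_iff) (fact dual_semidirect_nijenhuis_defect)+
  moreover have "(\<forall>p q. admissible_left_defect (dual_semidirect m l r) (map_prod N (dual_map \<beta>))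
        (map_prod S (dual_map \<alpha>)) p q = 0) \<longleftrightarrow>
      (\<forall>x y. admissible_left_defect m N S x y = 0) \<and> (\<forall>y v. action_compatibility_defect r S \<alpha> \<beta> y v = 0) \<and>
      (\<forall>x v. action_nijenhuis_defect r N \<alpha> x v - action_nijenhuis_defect l N \<alpha> x v = 0)"
    by (rule dual_pair_defect_vanishes_iff) (fact dual_semidirect_admissible_left_defect)+
  moreover have "(\<forall>p q. admissible_right_defect (dual_semidirect m l r) (map_prod N (dual_map \<beta>))
        (map_prod S (dual_map \<alpha>)) p q = 0) \<longleftrightarrow>
      (\<forall>x y. admissible_right_defect m N S x y = 0) \<and> (\<forall>y v. action_nijenhuis_defect r N \<alpha> y v = 0) \<and>
      (\<forall>x v. action_compatibility_defect r S \<alpha> \<beta> x v - action_compatibility_defect l S \<alpha> \<beta> x v = 0)"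
    by (rule dual_pair_defect_vanishes_iff) (fact dual_semidirect_admissible_right_defect)+
  ultimately show ?thesis
    using dual_semidirect_perm_algebra linear_map_prod_pscale[OF linear_N linear_dual_map[OF linear_\<beta>]]
      linear_map_prod_pscale[OF linear_S linear_dual_map[OF linear_\<alpha>]]
      nijenhuis_defect_m
    unfolding nijenhuis_perm_algebra_def nijenhuis_op_iff_defect admissible_iff_defects defects_vanish_def
      right_minus_eq
    by (smt (verit))
qed

end

theorem theorem2p40:
  fixes m :: "'k::field^'n::finite \<Rightarrow> 'k^'n \<Rightarrow> 'k^'n"
    and N S :: "'k^'n \<Rightarrow> 'k^'n"
    and l r :: "'k^'n \<Rightarrow> 'k^'m::finite \<Rightarrow> 'k^'m"
    and \<alpha> \<beta> :: "'k^'m \<Rightarrow> 'k^'m"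
  assumes "nijenhuis_perm_algebra vector_scalar_mult m N"
    and "perm_rep m l r"
    and "vlin S" and "vlin \<alpha>" and "vlin \<beta>"
  shows "((nijenhuis_perm_algebra pscale (semidirect m l r) (map_prod N \<alpha>) \<and>
          admissible pscale (semidirect m l r) (map_prod N \<alpha>) (map_prod S \<beta>))
     \<longleftrightarrow> (nijenhuis_perm_algebra pscale (dual_semidirect m l r) (map_prod N (dual_map \<beta>)) \<and>
          admissible pscale (dual_semidirect m l r) (map_prod N (dual_map \<beta>)) (map_prod S (dual_map \<alpha>)))) \<and>
    ((nijenhuis_perm_algebra pscale (dual_semidirect m l r) (map_prod N (dual_map \<beta>)) \<and>
          admissible pscale (dual_semidirect m l r) (map_prod N (dual_map \<beta>)) (map_prod S (dual_map \<alpha>)))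
     \<longleftrightarrow> (nijenhuis_rep m N l r \<alpha> \<and> admissible vector_scalar_mult m N S \<and> admissible_rep N l r \<beta> \<and>
          (\<forall>x u. \<beta> (l x (\<alpha> u)) + l (S (S x)) u = l (S x) (\<alpha> u) + \<beta> (l (S x) u)) \<and>
          (\<forall>x u. \<beta> (r x (\<alpha> u)) + r (S (S x)) u = r (S x) (\<alpha> u) + \<beta> (r (S x) u))))"
proof -
  interpret nijenhuis_semidirect m N S l r \<alpha> \<beta>
    by (rule nijenhuis_semidirect.intro) (fact assms)+
  show ?thesis
    using semidirect_iff_defects_vanish dual_semidirect_iff_defects_vanish
      compatible_representation_iff_defects_vanish
    by blast
qed

end
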